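(* Let $p\in(0,1)$, $\mu_p=(1-p)\delta_{-1}+p\delta_1$, $h_0=2p-1$, and let $\mathcal{U}$ be the uniform probability measure on $[-1,1]$. Define $I_p(x)=\frac{1+x}{2}\log\frac{1+x}{2p}+\frac{1-x}{2}\log\frac{1-x}{2(1-p)}$ for $x\in[-1,1]$ (and $+\infty$ otherwise), and the cost $w_p:\{-1,1\}^n\times[-1,1]^n\to[0,+\infty]$, $$w_p(x,u)=\sum_{i=1}^n 2\,|I_p'(u_i)|\,\mathbf{1}_{x_i(h_0-u_i)<0}.$$ Then for every probability measure $\nu$ on $\{-1,1\}^n$, $$\mathcal{W}_{w_p}(\nu,\mathcal{U}^n)\le H(\nu\,|\,\mu_p^n),$$ and equality holds if $\nu$ is a product measure.
   Context: $\mathcal{W}_c(\nu,\tilde\mu)=\inf_\pi\int c(x,u)\,d\pi(x,u)$, the infimum over couplings $\pi$ of $\nu$ and $\tilde\mu$. $H(\nu|\mu)$ is the relative entropy ($\int\log\frac{d\nu}{d\mu}d\nu$ if $\nu\ll\mu$, $+\infty$ otherwise). $\mu_p^n$ and $\mathcal{U}^n$ denote $n$-fold products. *)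

theory Defs
  imports "HOL-Probability.Probability"
begin

definition mu_p :: "real \<Rightarrow> real measure" where
  "mu_p p = density (count_space {-1, 1}) (\<lambda>x. if x = 1 then ennreal p else ennreal (1 - p))"

definition unifU :: "real measure" where
  "unifU = uniform_measure lborel {-1..1}"

text \<open>The rate function I_p (real formula on [-1,1], with 0 log 0 = 0 at the endpoints).
  Only its derivative on the open interval (-1,1) is used.\<close>
definition Ip :: "real \<Rightarrow> real \<Rightarrow> real" where
  "Ip p x = (if x = -1 \<or> x = 1 then
               (if x = 1 then ln (1 / p) else ln (1 / (1 - p)))
             else (1 + x) / 2 * ln ((1 + x) / (2 * p)) + (1 - x) / 2 * ln ((1 - x) / (2 * (1 - p))))"

text \<open>The cost w_p(x,u) = sum_i 2 |I_p'(u_i)| 1_{x_i (h0 - u_i) < 0}, h0 = 2p-1, valued in [0,+oo].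
  At u_i = +-1 one has |I_p'(u_i)| = +oo (convention oo * 0 = 0).\<close>
definition wp :: "real \<Rightarrow> nat \<Rightarrow> (nat \<Rightarrow> real) \<Rightarrow> (nat \<Rightarrow> real) \<Rightarrow> ennreal" where
  "wp p n x u = (\<Sum>i<n.
      (if -1 < u i \<and> u i < 1 then ennreal (2 * \<bar>deriv (Ip p) (u i)\<bar>) else \<infinity>)
      * (if x i * ((2 * p - 1) - u i) < 0 then 1 else 0))"

definition couplings :: "'a measure \<Rightarrow> 'b measure \<Rightarrow> ('a \<times> 'b) measure set" where
  "couplings N M = {\<pi>. sets \<pi> = sets (N \<Otimes>\<^sub>M M) \<and> distr \<pi> N fst = N \<and> distr \<pi> M snd = M}"

definition transport_cost :: "('a \<Rightarrow> 'b \<Rightarrow> ennreal) \<Rightarrow> 'a measure \<Rightarrow> 'b measure \<Rightarrow> ennreal" where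
  "transport_cost c N M = (INF \<pi>\<in>couplings N M. \<integral>\<^sup>+ z. c (fst z) (snd z) \<partial>\<pi>)"

text \<open>Relative entropy H(nu|mu) = int log (dnu/dmu) dnu if nu << mu, +oo otherwise.
  (For probability measures the negative part of the integrand is always integrable,
  so a non-integrable integrand means the integral is +oo.)\<close>
definition rel_entropy :: "'a measure \<Rightarrow> 'a measure \<Rightarrow> ereal" where
  "rel_entropy \<nu> \<mu> =
     (if sets \<nu> = sets \<mu> \<and> absolutely_continuous \<mu> \<nu>
         \<and> integrable \<nu> (\<lambda>x. ln (enn2real (RN_deriv \<mu> \<nu> x)))
      then ereal (\<integral>x. ln (enn2real (RN_deriv \<mu> \<nu> x)) \<partial>\<nu>)
      else \<infinity>)"

end

theory Submission
  imports Defs "HOL-Real_Asymp.Real_Asymp"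
begin

(*
  The cost is a sum over coordinates, and in dimension one wp1 p b u charges 2 |I_p'(u)| only when
  u lies on the wrong side of the mean h0 = 2p - 1. For a law on {-1, 1} with mass q at 1, the
  quantile coupling (b = 1 iff u <= 2q - 1) pays only for u between h0 and 2q - 1, so under the
  uniform law (density 1/2) it costs the integral of |I_p'| from h0 to 2q - 1, which is
  I_p(2q - 1); a Kantorovich potential shows that no coupling is cheaper.

  In dimension n + 1 one extends a coupling of the first n coordinates by the quantile coupling of
  the conditional law of the last coordinate (Knothe-Rosenblatt). The chain rule
  H(nu | mu_p^(n+1)) = H(nu_n | mu_p^n) + E[I_p(2 q(x) - 1)], with q(x) the conditional
  probability of a 1, shows by induction that this coupling costs at most H(nu | mu_p^n). For a
  product measure the entropy is the sum of the one-dimensional terms I_p(2 nu_i{1} - 1), and the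
  one-dimensional lower bound, applied to each coordinate of an arbitrary coupling, gives equality.
*)

lemma xlnx_div_ge:
  fixes y c :: real
  assumes "0 \<le> y" "0 < c"
  shows "y - c \<le> y * ln (y / c)"
proof (cases "y = 0")
  case False
  then have "y > 0" using assms by simp
  have "ln (c / y) \<le> c / y - 1" using assms \<open>y > 0\<close> by (intro ln_le_minus_one) simp
  then have "y * ln (c / y) \<le> c - y" using \<open>y > 0\<close> by (simp add: field_simps)
  moreover have "ln (c / y) = - ln (y / c)" using assms \<open>y > 0\<close> by (simp add: ln_div)
  ultimately show ?thesis by simp
qed (use assms in simp)

lemma continuous_on_xlnx_div:
  fixes c :: real
  assumes "0 < c"
  shows "continuous_on {0..} (\<lambda>y. y * ln (y / c))"
proof -
  have "continuous_on {0..} (\<lambda>y::real. y * ln y)"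
    unfolding continuous_on_eq_continuous_within
  proof
    fix y :: real assume "y \<in> {0..}"
    show "continuous (at y within {0..}) (\<lambda>y. y * ln y)"
    proof (cases "y = 0")
      case True
      have "((\<lambda>x::real. x * ln x) \<longlongrightarrow> 0) (at_right 0)" by real_asymp
      then show ?thesis using True by (simp add: continuous_within at_within_Ici_at_right)
    next
      case False
      then have "isCont (\<lambda>y. y * ln y) y" using \<open>y \<in> {0..}\<close> by (intro continuous_intros) auto
      then show ?thesis by (rule continuous_at_imp_continuous_at_within)
    qed
  qed
  then have cont: "continuous_on {0..} (\<lambda>y. y * ln y - y * ln c)"
    by (rule continuous_on_diff) (intro continuous_on_mult continuous_on_id continuous_on_const)
  have eq: "y * ln y - y * ln c = y * ln (y / c)" if "y \<in> {0..}" for y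
    using that assms by (cases "y = 0") (auto simp: ln_div right_diff_distrib)
  from cont eq show ?thesis by (rule continuous_on_eq)
qed

lemma Ip_eq: "Ip p x = (1 + x) / 2 * ln ((1 + x) / (2 * p)) + (1 - x) / 2 * ln ((1 - x) / (2 * (1 - p)))"
proof -
  have "2 / (2 * (1 - p)) = 1 / (1 - p)" by (cases "p = 1") (simp_all add: divide_simps)
  then show ?thesis by (auto simp: Ip_def simp del: times_divide_eq_right)
qed

lemma Ip_eq_kl: "Ip p (2 * t - 1) = t * ln (t / p) + (1 - t) * ln ((1 - t) / (1 - p))"
proof -
  have "(2 - 2 * t) / (2 - 2 * p) = (1 - t) / (1 - p)"
    by (cases "p = 1") (simp_all add: field_simps)
  then show ?thesis by (simp add: Ip_eq)
qed

lemma Ip_reflect: "Ip (1 - p) (- x) = Ip p x"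
  unfolding Ip_eq by (simp add: algebra_simps)

lemma Ip_at_mean: "0 < p \<Longrightarrow> p < 1 \<Longrightarrow> Ip p (2 * p - 1) = 0"
  by (simp add: Ip_eq)

lemma Ip_nonneg:
  assumes "0 < p" "p < 1" "-1 \<le> x" "x \<le> 1"
  shows "0 \<le> Ip p x"
proof -
  have "(1 + x) / 2 - p \<le> (1 + x) / 2 * ln ((1 + x) / 2 / p)"
    and "(1 - x) / 2 - (1 - p) \<le> (1 - x) / 2 * ln ((1 - x) / 2 / (1 - p))"
    using assms by (intro xlnx_div_ge; simp)+
  then show ?thesis by (simp add: Ip_eq field_simps)
qed

lemma continuous_on_Ip:
  assumes "0 < p" "p < 1"
  shows "continuous_on {-1..1} (Ip p)"
proof -
  have "continuous_on {-1..1} (\<lambda>x. (1 + x) / 2 * ln ((1 + x) / 2 / p))"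
    by (rule continuous_on_compose2[OF continuous_on_xlnx_div[of p]])
       (use assms in \<open>auto intro!: continuous_intros\<close>)
  moreover have "continuous_on {-1..1} (\<lambda>x. (1 - x) / 2 * ln ((1 - x) / 2 / (1 - p)))"
    by (rule continuous_on_compose2[OF continuous_on_xlnx_div[of "1 - p"]])
       (use assms in \<open>auto intro!: continuous_intros\<close>)
  ultimately have "continuous_on {-1..1} (\<lambda>x. (1 + x) / 2 * ln ((1 + x) / 2 / p)
      + (1 - x) / 2 * ln ((1 - x) / 2 / (1 - p)))"
    by (rule continuous_on_add)
  then show ?thesis by (rule continuous_on_eq) (simp add: Ip_eq mult.commute)
qed

definition Ip' :: "real \<Rightarrow> real \<Rightarrow> real" where
  "Ip' p u = (ln ((1 + u) / (2 * p)) - ln ((1 - u) / (2 * (1 - p)))) / 2"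

lemma Ip_has_real_derivative:
  assumes "0 < p" "p < 1" "-1 < u" "u < 1"
  shows "(Ip p has_real_derivative Ip' p u) (at u)"
proof -
  have "((\<lambda>x. (1 + x) / 2 * ln ((1 + x) / (2 * p)) + (1 - x) / 2 * ln ((1 - x) / (2 * (1 - p))))
      has_real_derivative Ip' p u) (at u)"
    unfolding Ip'_def using assms
    by (auto intro!: derivative_eq_intros simp: divide_simps) (simp add: algebra_simps)
  moreover have "Ip p = (\<lambda>x. (1 + x) / 2 * ln ((1 + x) / (2 * p)) + (1 - x) / 2 * ln ((1 - x) / (2 * (1 - p))))"
    by (rule ext) (rule Ip_eq)
  ultimately show ?thesis by simp
qed

lemma deriv_Ip: "0 < p \<Longrightarrow> p < 1 \<Longrightarrow> -1 < u \<Longrightarrow> u < 1 \<Longrightarrow> deriv (Ip p) u = Ip' p u"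
  by (rule DERIV_imp_deriv) (rule Ip_has_real_derivative)

lemma Ip'_reflect: "Ip' (1 - p) (- u) = - Ip' p u"
  unfolding Ip'_def by (simp add: field_simps)

lemma Ip'_at_mean: "0 < p \<Longrightarrow> p < 1 \<Longrightarrow> Ip' p (2 * p - 1) = 0"
  by (simp add: Ip'_def)

lemma Ip'_mono:
  assumes "0 < p" "p < 1" "-1 < u" "u \<le> v" "v < 1"
  shows "Ip' p u \<le> Ip' p v"
proof -
  have "ln ((1 + u) / (2 * p)) \<le> ln ((1 + v) / (2 * p))"
    and "ln ((1 - v) / (2 * (1 - p))) \<le> ln ((1 - u) / (2 * (1 - p)))"
    using assms by (auto simp: divide_right_mono)
  then show ?thesis unfolding Ip'_def by (simp add: divide_right_mono)
qed

lemma Ip'_nonneg: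
  assumes "0 < p" "p < 1" "2 * p - 1 \<le> u" "u \<le> 1"
  shows "0 \<le> Ip' p u"
proof (cases "u = 1")
  case False
  then show ?thesis using Ip'_mono[of p "2 * p - 1" u] Ip'_at_mean assms by auto
qed (use assms in \<open>simp add: Ip'_def\<close>)
  \<comment> \<open>at \<open>u = 1\<close> this uses the junk value \<open>ln 0 = 0\<close>\<close>

lemma has_integral_Ip':
  assumes "0 < p" "p < 1" "2 * p - 1 \<le> a" "a \<le> 1"
  shows "(Ip' p has_integral Ip p a) {2 * p - 1..a}"
proof -
  have "(Ip' p has_integral Ip p a - Ip p (2 * p - 1)) {2 * p - 1..a}"
  proof (rule fundamental_theorem_of_calculus_interior)
    show "continuous_on {2 * p - 1..a} (Ip p)"
      by (rule continuous_on_subset[OF continuous_on_Ip]) (use assms in auto)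
  next
    fix x assume "x \<in> {2 * p - 1<..<a}"
    then have "(Ip p has_real_derivative Ip' p x) (at x)"
      using assms by (intro Ip_has_real_derivative) auto
    then show "(Ip p has_vector_derivative Ip' p x) (at x)"
      by (simp add: has_real_derivative_iff_has_vector_derivative)
  qed (use assms in auto)
  then show ?thesis using Ip_at_mean assms by simp
qed

definition cost_rate :: "real \<Rightarrow> real \<Rightarrow> ennreal" where
  "cost_rate p u = (if -1 < u \<and> u < 1 then ennreal (2 * \<bar>Ip' p u\<bar>) else \<infinity>)"

definition wp1 :: "real \<Rightarrow> real \<Rightarrow> real \<Rightarrow> ennreal" where
  "wp1 p b u = cost_rate p u * (if b * ((2 * p - 1) - u) < 0 then 1 else 0)"

lemma wp_eq_sum_wp1:
  assumes "0 < p" "p < 1"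
  shows "wp p n x u = (\<Sum>i<n. wp1 p (x i) (u i))"
  unfolding wp_def wp1_def cost_rate_def by (intro sum.cong refl) (simp add: deriv_Ip[OF assms])

lemma wp_Suc_fun_upd:
  assumes "0 < p" "p < 1"
  shows "wp p (Suc n) (x(n := b)) (v(n := y)) = wp p n x v + wp1 p b y"
  unfolding wp_eq_sum_wp1[OF assms] by (simp add: add.commute)

lemma borel_measurable_cost_rate [measurable]: "cost_rate p \<in> borel_measurable borel"
  unfolding cost_rate_def Ip'_def by measurable

lemma borel_measurable_wp1 [measurable]:
  assumes [measurable]: "X \<in> borel_measurable M" "Y \<in> borel_measurable M"
  shows "(\<lambda>z. wp1 p (X z) (Y z)) \<in> borel_measurable M"
  unfolding wp1_def by measurable

lemma cost_rate_reflect: "cost_rate (1 - p) (- u) = cost_rate p u"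
  by (auto simp: cost_rate_def Ip'_reflect)

lemma wp1_reflect: "wp1 (1 - p) (- b) (- u) = wp1 p b u"
  by (simp add: wp1_def cost_rate_reflect algebra_simps)

lemma cost_rate_at_mean: "0 < p \<Longrightarrow> p < 1 \<Longrightarrow> cost_rate p (2 * p - 1) = 0"
  by (simp add: cost_rate_def Ip'_at_mean)

lemma cost_rate_mono:
  assumes "0 < p" "p < 1" "2 * p - 1 \<le> u" "u \<le> v"
  shows "cost_rate p u \<le> cost_rate p v"
proof (cases "v < 1")
  case True
  then have "0 \<le> Ip' p u" "Ip' p u \<le> Ip' p v"
    using assms Ip'_nonneg Ip'_mono[of p u v] by auto
  then show ?thesis using assms True by (simp add: cost_rate_def)
qed (simp add: cost_rate_def)

lemma sets_unifU [simp, measurable_cong]: "sets unifU = sets borel"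
  by (simp add: unifU_def)

lemma space_unifU [simp]: "space unifU = UNIV"
  by (simp add: unifU_def)

lemma prob_space_unifU: "prob_space unifU"
  unfolding unifU_def by (rule prob_space_uniform_measure) auto

lemma emeasure_unifU:
  "A \<in> sets borel \<Longrightarrow> emeasure unifU A = emeasure lborel ({-1..1} \<inter> A) / 2"
  by (simp add: unifU_def)

lemma ennreal_half: "ennreal x / 2 = ennreal (x / 2)"
  using divide_ennreal[of x 2] by (cases "0 \<le> x") (simp_all add: ennreal_neg)

lemma emeasure_unifU_atMost:
  assumes "-1 \<le> c" "c \<le> 1"
  shows "emeasure unifU {..c} = ennreal ((1 + c) / 2)"
proof -
  have "{-1..1} \<inter> {..c} = {-1..c}" using assms by auto
  then show ?thesis using assms by (simp add: emeasure_unifU ennreal_half add.commute)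
qed

lemma emeasure_unifU_greaterThan:
  assumes "-1 \<le> c" "c \<le> 1"
  shows "emeasure unifU {c<..} = ennreal ((1 - c) / 2)"
proof -
  have "{-1..1} \<inter> {c<..} = {c<..1}" using assms by auto
  then show ?thesis using assms by (simp add: emeasure_unifU ennreal_half)
qed

lemma nn_integral_unifU:
  "f \<in> borel_measurable borel \<Longrightarrow>
     (\<integral>\<^sup>+x. f x \<partial>unifU) = (\<integral>\<^sup>+x. f x * indicator {-1..1} x \<partial>lborel) / 2"
  unfolding unifU_def by (subst nn_integral_uniform_measure) auto

lemma AE_unifU_neq: "AE x in unifU. x \<noteq> a"
  unfolding unifU_def
  by (rule AE_uniform_measureI) (auto intro: eventually_mono[OF AE_lborel_singleton[of a]])

lemma distr_unifU_uminus: "distr unifU unifU uminus = unifU"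
proof (rule measure_eqI)
  fix A :: "real set" assume "A \<in> sets (distr unifU unifU uminus)"
  then have A: "A \<in> sets borel" by simp
  have "(uminus :: real \<Rightarrow> real) \<in> borel_measurable borel" by simp
  from measurable_sets[OF this A] have "uminus -` A \<in> sets borel" by simp
  then have "emeasure (distr unifU unifU uminus) A = emeasure lborel ({-1..1} \<inter> uminus -` A) / 2"
    using A by (simp add: emeasure_distr emeasure_unifU)
  also have "{-1..1} \<inter> uminus -` A = uminus -` ({-1..1} \<inter> A)" by auto
  also have "emeasure lborel (uminus -` ({-1..1} \<inter> A)) = emeasure lborel ({-1..1} \<inter> A)"
    using emeasure_distr[of uminus lborel borel "{-1..1} \<inter> A"] A by (simp add: lborel_distr_uminus)
  finally show "emeasure (distr unifU unifU uminus) A = emeasure unifU A"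
    using A by (simp add: emeasure_unifU)
qed simp

lemma nn_integral_cost_rate:
  assumes "0 < p" "p < 1" "2 * p - 1 \<le> a" "a \<le> 1"
  shows "(\<integral>\<^sup>+u. indicator {2 * p - 1..a} u * cost_rate p u \<partial>unifU) = ennreal (Ip p a)"
proof -
  have "(\<integral>\<^sup>+u. indicator {2 * p - 1..a} u * cost_rate p u \<partial>unifU)
      = (\<integral>\<^sup>+u. indicator {2 * p - 1..a} u * cost_rate p u * indicator {-1..1} u \<partial>lborel) / 2"
    by (rule nn_integral_unifU) measurable
  also have "(\<integral>\<^sup>+u. indicator {2 * p - 1..a} u * cost_rate p u * indicator {-1..1} u \<partial>lborel)
      = (\<integral>\<^sup>+u. ennreal (2 * Ip' p u) * indicator {2 * p - 1..a} u \<partial>lborel)"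
    using AE_lborel_singleton[of 1]
    by (rule nn_integral_cong_AE[OF eventually_mono])
       (use assms Ip'_nonneg in \<open>auto simp: cost_rate_def indicator_def mult.commute\<close>)
  also have "\<dots> = ennreal (2 * Ip p a)"
    by (rule nn_integral_has_integral_lebesgue')
       (use assms Ip'_nonneg has_integral_mult_right[OF has_integral_Ip'[OF assms]] in auto)
  finally show ?thesis by (simp add: ennreal_half)
qed

lemma nn_integral_unifU_reflect:
  "f \<in> borel_measurable borel \<Longrightarrow> (\<integral>\<^sup>+y. f (- y) \<partial>unifU) = (\<integral>\<^sup>+y. f y \<partial>unifU)"
  using nn_integral_distr[of uminus unifU unifU f] by (simp add: distr_unifU_uminus)

definition bern_quantile :: "real \<Rightarrow> real \<Rightarrow> real" where
  "bern_quantile q y = (if y \<le> 2 * q - 1 then 1 else -1)"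

lemma borel_measurable_bern_quantile [measurable]:
  assumes [measurable]: "f \<in> borel_measurable M" "g \<in> borel_measurable M"
  shows "(\<lambda>z. bern_quantile (f z) (g z)) \<in> borel_measurable M"
  unfolding bern_quantile_def by measurable

lemma emeasure_unifU_bern_quantile:
  assumes "0 \<le> q" "q \<le> 1" "b \<in> {-1, 1}"
  shows "emeasure unifU {y. bern_quantile q y = b} = ennreal (if b = 1 then q else 1 - q)"
proof (cases "b = 1")
  case True
  then have "{y. bern_quantile q y = b} = {..2 * q - 1}" by (auto simp: bern_quantile_def)
  then show ?thesis using True assms emeasure_unifU_atMost[of "2 * q - 1"] by simp
next
  case False
  then have "{y. bern_quantile q y = b} = {2 * q - 1<..}" using assms by (auto simp: bern_quantile_def)
  then show ?thesis using False assms emeasure_unifU_greaterThan[of "2 * q - 1"] by simp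
qed

lemma nn_integral_wp1_bern_quantile_p_le_q:
  assumes "0 < p" "p < 1" "p \<le> q" "q \<le> 1"
  shows "(\<integral>\<^sup>+y. wp1 p (bern_quantile q y) y \<partial>unifU) = ennreal (Ip p (2 * q - 1))"
proof -
  have "wp1 p (bern_quantile q y) y = indicator {2 * p - 1..2 * q - 1} y * cost_rate p y" for y
    using assms cost_rate_at_mean[of p]
    by (cases "y = 2 * p - 1") (auto simp: wp1_def bern_quantile_def indicator_def)
  then show ?thesis using nn_integral_cost_rate assms by simp
qed

(* The case q < p is the case p <= q for the reflected data (1 - p, - b, - u). *)
lemma nn_integral_wp1_bern_quantile:
  assumes "0 < p" "p < 1" "0 \<le> q" "q \<le> 1"
  shows "(\<integral>\<^sup>+y. wp1 p (bern_quantile q y) y \<partial>unifU) = ennreal (Ip p (2 * q - 1))"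
proof (cases "p \<le> q")
  case True
  then show ?thesis using nn_integral_wp1_bern_quantile_p_le_q assms by simp
next
  case False
  have "(\<integral>\<^sup>+y. wp1 p (bern_quantile q y) y \<partial>unifU)
      = (\<integral>\<^sup>+y. wp1 (1 - p) (- bern_quantile q (- y)) y \<partial>unifU)"
    by (subst nn_integral_unifU_reflect[symmetric]) (simp_all add: wp1_reflect)
  also have "\<dots> = (\<integral>\<^sup>+y. wp1 (1 - p) (bern_quantile (1 - q) y) y \<partial>unifU)"
    using AE_unifU_neq[of "1 - 2 * q"]
    by (rule nn_integral_cong_AE[OF eventually_mono]) (auto simp: bern_quantile_def)
  also have "\<dots> = ennreal (Ip (1 - p) (- (2 * q - 1)))"
    using nn_integral_wp1_bern_quantile_p_le_q[of "1 - p" "1 - q"] assms False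
    by (simp add: algebra_simps)
  finally show ?thesis using Ip_reflect[of p "2 * q - 1"] by simp
qed

lemma dual_potential_le_wp1:
  assumes "0 < p" "p < 1" "2 * p - 1 \<le> a" "b \<in> {-1, 1}"
  shows "indicator {2 * p - 1..a} u * cost_rate p u + cost_rate p a * indicator {a<..} u
    \<le> wp1 p b u + cost_rate p a * indicator {-1} b"
proof (cases "b = 1")
  case True
  consider "u \<le> 2 * p - 1" | "2 * p - 1 < u \<and> u \<le> a" | "a < u" by linarith
  then show ?thesis
  proof cases
    case 1
    then show ?thesis using True assms cost_rate_at_mean[of p]
      by (cases "u = 2 * p - 1") (auto simp: indicator_def)
  next
    case 2
    then show ?thesis using True by (simp add: wp1_def indicator_def)
  next
    case 3
    then show ?thesis using True assms cost_rate_mono[of p a u] by (simp add: wp1_def indicator_def)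
  qed
next
  case False
  then have "b = -1" using assms by simp
  have "indicator {2 * p - 1..a} u * cost_rate p u + cost_rate p a * indicator {a<..} u \<le> cost_rate p a"
    using assms cost_rate_mono[of p u a] by (auto simp: indicator_def)
  then show ?thesis using \<open>b = -1\<close> by (simp add: add_increasing)
qed

lemma nn_integral_wp1_ge_p_le_q:
  assumes p: "0 < p" "p < 1" "p \<le> q" "q \<le> 1"
    and X: "X \<in> M \<rightarrow>\<^sub>M count_space {-1, 1}"
    and Y: "Y \<in> M \<rightarrow>\<^sub>M unifU" "distr M unifU Y = unifU"
    and X_minus: "emeasure M {z \<in> space M. X z = -1} = ennreal (1 - q)"
  shows "ennreal (Ip p (2 * q - 1)) \<le> (\<integral>\<^sup>+z. wp1 p (X z) (Y z) \<partial>M)"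
proof -
  define a where "a = 2 * q - 1"
  define K where "K = cost_rate p a"
  \<comment> \<open>\<open>(\<psi>, - K * indicator {-1})\<close> is a Kantorovich dual pair for \<open>wp1 p\<close>
    by \<open>dual_potential_le_wp1\<close>\<close>
  define \<psi> where "\<psi> u = indicator {2 * p - 1..a} u * cost_rate p u + K * indicator {a<..} u" for u
  have a: "2 * p - 1 \<le> a" "a \<le> 1" "-1 \<le> a" using p by (auto simp: a_def)
  have a_half: "(1 - a) / 2 = 1 - q" by (simp add: a_def)
  have [measurable]: "\<psi> \<in> borel_measurable borel"
    unfolding \<psi>_def by measurable
  have [measurable]: "X \<in> borel_measurable M"
    using measurable_compose[OF X borel_measurable_count_space[of "\<lambda>x. x"]] by simp
  have [measurable]: "Y \<in> borel_measurable M"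
    using Y(1) measurable_cong_sets[OF refl sets_unifU] by blast
  have K_finite: "K * ennreal (1 - q) \<noteq> \<infinity>"
  proof (cases "a < 1")
    case True
    then show ?thesis using a p by (simp add: K_def cost_rate_def ennreal_mult_eq_top_iff)
  qed (use a_def a in simp)
  have "ennreal (Ip p a) + K * ennreal (1 - q) = (\<integral>\<^sup>+u. \<psi> u \<partial>unifU)"
    using nn_integral_cost_rate[OF p(1,2) a(1,2)] emeasure_unifU_greaterThan[OF a(3,2)]
    by (simp add: \<psi>_def nn_integral_add nn_integral_cmult_indicator a_half)
  also have "\<dots> = (\<integral>\<^sup>+z. \<psi> (Y z) \<partial>M)"
    using nn_integral_distr[OF Y(1), of \<psi>] Y(2) by simp
  also have "\<dots> \<le> (\<integral>\<^sup>+z. wp1 p (X z) (Y z) + K * indicator {-1} (X z) \<partial>M)"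
    using measurable_space[OF X] dual_potential_le_wp1[OF p(1,2) a(1)]
    by (intro nn_integral_mono) (simp add: \<psi>_def K_def)
  also have "\<dots> = (\<integral>\<^sup>+z. wp1 p (X z) (Y z) \<partial>M) + (\<integral>\<^sup>+z. K * indicator {z \<in> space M. X z = -1} z \<partial>M)"
    by (subst nn_integral_add) (auto intro!: nn_integral_cong simp: indicator_def)
  also have "\<dots> = (\<integral>\<^sup>+z. wp1 p (X z) (Y z) \<partial>M) + K * emeasure M {z \<in> space M. X z = -1}"
    by (subst nn_integral_cmult_indicator) simp_all
  finally show ?thesis using K_finite X_minus unfolding a_def
    by (metis add.commute ennreal_add_left_cancel_le)
qed

lemma nn_integral_wp1_ge:
  assumes p: "0 < p" "p < 1" "0 \<le> q" "q \<le> 1"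
    and X: "X \<in> M \<rightarrow>\<^sub>M count_space {-1, 1}"
    and Y: "Y \<in> M \<rightarrow>\<^sub>M unifU" "distr M unifU Y = unifU"
    and X_plus: "emeasure M {z \<in> space M. X z = 1} = ennreal q"
    and X_minus: "emeasure M {z \<in> space M. X z = -1} = ennreal (1 - q)"
  shows "ennreal (Ip p (2 * q - 1)) \<le> (\<integral>\<^sup>+z. wp1 p (X z) (Y z) \<partial>M)"
proof (cases "p \<le> q")
  case True
  show ?thesis by (rule nn_integral_wp1_ge_p_le_q[OF p(1,2) True p(4) X Y X_minus])
next
  case False
  have "(\<lambda>z. - X z) \<in> M \<rightarrow>\<^sub>M count_space {-1, 1}"
    by (rule measurable_compose[OF X]) auto
  moreover have "(\<lambda>z. - Y z) \<in> M \<rightarrow>\<^sub>M unifU"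
    using Y(1) by (rule measurable_compose) simp
  moreover have "distr M unifU (\<lambda>z. - Y z) = unifU"
    using distr_distr[of uminus unifU unifU Y M, symmetric] Y by (simp add: comp_def distr_unifU_uminus)
  moreover have "emeasure M {z \<in> space M. - X z = -1} = ennreal (1 - (1 - q))"
    using X_plus by simp
  ultimately have "ennreal (Ip (1 - p) (2 * (1 - q) - 1)) \<le> (\<integral>\<^sup>+z. wp1 (1 - p) (- X z) (- Y z) \<partial>M)"
    using False p by (intro nn_integral_wp1_ge_p_le_q) auto
  then show ?thesis using Ip_reflect[of p "2 * q - 1"] by (simp add: wp1_reflect)
qed

definition cube :: "nat \<Rightarrow> (nat \<Rightarrow> real) set" where
  "cube n = PiE {..<n} (\<lambda>_. {-1, 1})"

lemma finite_cube [simp]: "finite (cube n)"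
  unfolding cube_def by (intro finite_PiE) auto

lemma cube_0: "cube 0 = {\<lambda>_. undefined}"
  unfolding cube_def by simp

lemma fun_upd_in_cube: "x \<in> cube n \<Longrightarrow> b \<in> {-1, 1} \<Longrightarrow> x(n := b) \<in> cube (Suc n)"
  unfolding cube_def by (auto simp: PiE_iff extensional_def)

lemma cube_SucE:
  assumes "x \<in> cube (Suc n)"
  obtains x' b where "x' \<in> cube n" "b \<in> {-1, 1}" "x = x'(n := b)"
  using assms unfolding cube_def lessThan_Suc PiE_insert_eq by auto

lemma fun_upd_cube_eq_iff:
  assumes "x \<in> cube n" "x' \<in> cube n"
  shows "x(n := b) = x'(n := b') \<longleftrightarrow> x = x' \<and> b = b'"
  using assms unfolding cube_def by (auto simp: fun_eq_iff PiE_def extensional_def)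

lemma sum_cube_Suc:
  "(\<Sum>x\<in>cube (Suc n). F x) = (\<Sum>x\<in>cube n. F (x(n := 1)) + F (x(n := -1)))"
proof -
  have "inj_on (\<lambda>(b, x). x(n := b)) ({-1, 1} \<times> cube n)"
    unfolding cube_def by (rule inj_combinator) simp
  then have "(\<Sum>x\<in>cube (Suc n). F x) = (\<Sum>(b, x)\<in>{-1, 1} \<times> cube n. F (x(n := b)))"
    unfolding cube_def lessThan_Suc PiE_insert_eq by (simp add: sum.reindex case_prod_unfold)
  also have "\<dots> = (\<Sum>x\<in>cube n. F (x(n := 1)) + F (x(n := -1)))"
    by (simp add: sum.cartesian_product[symmetric] sum.distrib add.commute)
  finally show ?thesis .
qed

definition bern_pmf :: "(nat \<Rightarrow> real) \<Rightarrow> nat \<Rightarrow> (nat \<Rightarrow> real) \<Rightarrow> real" where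
  "bern_pmf g n x = (\<Prod>i<n. if x i = 1 then g i else 1 - g i)"

lemma bern_pmf_fun_upd:
  "bern_pmf g (Suc n) (x(n := b)) = bern_pmf g n x * (if b = 1 then g n else 1 - g n)"
proof -
  have "(\<Prod>i<n. if (x(n := b)) i = 1 then g i else 1 - g i) = bern_pmf g n x"
    unfolding bern_pmf_def by (intro prod.cong) auto
  then show ?thesis by (simp add: bern_pmf_def)
qed

lemma bern_pmf_nonneg: "(\<And>i. i < n \<Longrightarrow> 0 \<le> g i \<and> g i \<le> 1) \<Longrightarrow> 0 \<le> bern_pmf g n x"
  unfolding bern_pmf_def by (intro prod_nonneg) auto

lemma bern_pmf_pos: "(\<And>i. i < n \<Longrightarrow> 0 < g i \<and> g i < 1) \<Longrightarrow> 0 < bern_pmf g n x"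
  unfolding bern_pmf_def by (intro prod_pos) auto

lemma sum_bern_pmf: "(\<Sum>x\<in>cube n. bern_pmf g n x) = 1"
proof (induction n)
  case 0
  then show ?case by (simp add: cube_0 bern_pmf_def)
next
  case (Suc n)
  then show ?case by (simp add: sum_cube_Suc bern_pmf_fun_upd sum_distrib_left[symmetric] algebra_simps)
qed

definition rel_entropy_pmf :: "real \<Rightarrow> nat \<Rightarrow> ((nat \<Rightarrow> real) \<Rightarrow> real) \<Rightarrow> real" where
  "rel_entropy_pmf p n f = (\<Sum>x\<in>cube n. f x * ln (f x / bern_pmf (\<lambda>_. p) n x))"

definition marg_first :: "nat \<Rightarrow> ((nat \<Rightarrow> real) \<Rightarrow> real) \<Rightarrow> (nat \<Rightarrow> real) \<Rightarrow> real" where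
  "marg_first n f x = f (x(n := 1)) + f (x(n := -1))"

definition cond_one :: "nat \<Rightarrow> ((nat \<Rightarrow> real) \<Rightarrow> real) \<Rightarrow> (nat \<Rightarrow> real) \<Rightarrow> real" where
  "cond_one n f x = f (x(n := 1)) / marg_first n f x"

lemma cond_one_bounds:
  assumes "0 \<le> f (x(n := 1))" "0 \<le> f (x(n := -1))"
  shows "0 \<le> cond_one n f x" "cond_one n f x \<le> 1"
  using assms by (auto simp: cond_one_def marg_first_def divide_le_eq_1)

lemma marg_first_mult_cond_one:
  assumes "0 \<le> f (x(n := 1))" "0 \<le> f (x(n := -1))"
  shows "marg_first n f x * cond_one n f x = f (x(n := 1))"
    and "marg_first n f x * (1 - cond_one n f x) = f (x(n := -1))"
  using assms
  by (cases "f (x(n := 1)) + f (x(n := -1)) = 0", auto simp: cond_one_def marg_first_def field_simps)+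

lemma xlnx_chain_rule_two_points:
  assumes "0 < p" "p < 1" "0 < m" "0 \<le> A" "0 \<le> B"
  shows "A * ln (A / (m * p)) + B * ln (B / (m * (1 - p)))
       = (A + B) * ln ((A + B) / m) + (A + B) * Ip p (2 * (A / (A + B)) - 1)"
proof (cases "A + B = 0")
  case False
  define s where "s = A + B"
  have s: "0 < s" using assms False by (simp add: s_def)
  have split: "C * ln (C / (m * c)) = C * ln (s / m) + C * ln (C / s / c)" if "0 \<le> C" "0 < c" for C c
  proof (cases "C = 0")
    case False
    then have "0 < C" using that by simp
    then show ?thesis using that s assms(3) by (simp add: ln_div ln_mult algebra_simps)
  qed simp
  have "A * ln (A / (m * p)) = A * ln (s / m) + A * ln (A / s / p)"
    using assms by (intro split) auto
  moreover have "B * ln (B / (m * (1 - p))) = B * ln (s / m) + B * ln (B / s / (1 - p))"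
    using assms by (intro split) auto
  moreover have "Ip p (2 * (A / s) - 1) = A / s * ln (A / s / p) + B / s * ln (B / s / (1 - p))"
  proof -
    have "B / s = 1 - A / s" using s by (simp add: s_def field_simps)
    then show ?thesis by (simp only: Ip_eq_kl)
  qed
  moreover have "A * ln (s / m) + B * ln (s / m) = s * ln (s / m)"
    by (simp add: s_def algebra_simps)
  ultimately show ?thesis using s by (simp add: s_def[symmetric] field_simps)
qed (use assms in \<open>simp add: add_nonneg_eq_0_iff\<close>)

lemma rel_entropy_pmf_Suc:
  assumes "0 < p" "p < 1" "\<And>x. x \<in> cube (Suc n) \<Longrightarrow> 0 \<le> f x"
  shows "rel_entropy_pmf p (Suc n) f = rel_entropy_pmf p n (marg_first n f)
     + (\<Sum>x\<in>cube n. marg_first n f x * Ip p (2 * cond_one n f x - 1))"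
proof -
  have "f (x(n := 1)) * ln (f (x(n := 1)) / (bern_pmf (\<lambda>_. p) n x * p))
      + f (x(n := -1)) * ln (f (x(n := -1)) / (bern_pmf (\<lambda>_. p) n x * (1 - p)))
    = marg_first n f x * ln (marg_first n f x / bern_pmf (\<lambda>_. p) n x)
      + marg_first n f x * Ip p (2 * cond_one n f x - 1)" if "x \<in> cube n" for x
    unfolding marg_first_def cond_one_def
    using assms fun_upd_in_cube[OF that] bern_pmf_pos[of n "\<lambda>_. p"]
    by (intro xlnx_chain_rule_two_points) auto
  then show ?thesis
    by (simp add: rel_entropy_pmf_def sum_cube_Suc bern_pmf_fun_upd sum.distrib cong: sum.cong)
qed

lemma rel_entropy_pmf_nonneg:
  assumes "0 < p" "p < 1" "\<And>x. x \<in> cube n \<Longrightarrow> 0 \<le> f x" "(\<Sum>x\<in>cube n. f x) = 1"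
  shows "0 \<le> rel_entropy_pmf p n f"
proof -
  have "0 = (\<Sum>x\<in>cube n. f x - bern_pmf (\<lambda>_. p) n x)"
    using assms(4) by (simp add: sum_subtractf sum_bern_pmf)
  also have "\<dots> \<le> rel_entropy_pmf p n f"
    unfolding rel_entropy_pmf_def
    using assms bern_pmf_pos[of n "\<lambda>_. p"] by (intro sum_mono xlnx_div_ge) auto
  finally show ?thesis .
qed

lemma rel_entropy_pmf_bern_pmf:
  assumes "0 < p" "p < 1" "\<And>i. i < n \<Longrightarrow> 0 \<le> g i \<and> g i \<le> 1"
  shows "rel_entropy_pmf p n (bern_pmf g n) = (\<Sum>i<n. Ip p (2 * g i - 1))"
  using assms(3)
proof (induction n)
  case 0
  then show ?case by (simp add: rel_entropy_pmf_def cube_0 bern_pmf_def)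
next
  case (Suc n)
  have marg: "marg_first n (bern_pmf g (Suc n)) = bern_pmf g n"
    by (rule ext) (simp add: marg_first_def bern_pmf_fun_upd algebra_simps)
  have "bern_pmf g n x * Ip p (2 * cond_one n (bern_pmf g (Suc n)) x - 1)
      = bern_pmf g n x * Ip p (2 * g n - 1)" for x
    by (cases "bern_pmf g n x = 0") (simp_all add: cond_one_def marg bern_pmf_fun_upd)
  then have "(\<Sum>x\<in>cube n. bern_pmf g n x * Ip p (2 * cond_one n (bern_pmf g (Suc n)) x - 1))
      = (\<Sum>x\<in>cube n. bern_pmf g n x * Ip p (2 * g n - 1))"
    by (rule sum.cong[OF refl])
  also have "\<dots> = Ip p (2 * g n - 1)"
    by (simp add: sum_distrib_right[symmetric] sum_bern_pmf)
  finally have "(\<Sum>x\<in>cube n. bern_pmf g n x * Ip p (2 * cond_one n (bern_pmf g (Suc n)) x - 1))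
      = Ip p (2 * g n - 1)" .
  then have "rel_entropy_pmf p (Suc n) (bern_pmf g (Suc n))
      = rel_entropy_pmf p n (bern_pmf g n) + Ip p (2 * g n - 1)"
    using assms Suc.prems bern_pmf_nonneg[of "Suc n" g]
    by (simp add: rel_entropy_pmf_Suc marg sum_distrib_right[symmetric] sum_bern_pmf)
  then show ?case using Suc by simp
qed

lemma count_space_cube: "count_space (cube n) = PiM {..<n} (\<lambda>_. count_space {-1, 1})"
  unfolding cube_def by (rule count_space_PiM_finite[symmetric]) auto

lemma sets_PiM_cube:
  assumes "\<And>i. i < n \<Longrightarrow> sets (M i) = sets (count_space {-1, 1})"
  shows "sets (PiM {..<n} M) = Pow (cube n)"
proof -
  have "sets (PiM {..<n} M) = sets (PiM {..<n} (\<lambda>_. count_space {-1, 1::real}))"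
    using assms by (intro sets_PiM_cong) auto
  then show ?thesis by (simp add: count_space_cube[symmetric])
qed

lemma measure_minus_one_sign:
  assumes "prob_space M" "sets M = sets (count_space {-1, 1::real})"
  shows "measure M {-1} = 1 - measure M {1}"
proof -
  interpret prob_space M by fact
  have "space M = {-1, 1}" using sets_eq_imp_space_eq[OF assms(2)] by simp
  then have "measure M {-1} + measure M {1} = 1"
    using finite_measure_Union[of "{-1}" "{1}"] prob_space assms(2) by (simp add: insert_commute)
  then show ?thesis by simp
qed

lemma measure_PiM_singleton_cube:
  assumes M: "\<And>i. i < n \<Longrightarrow> prob_space (M i) \<and> sets (M i) = sets (count_space {-1, 1})"
    and x: "x \<in> cube n"
  shows "measure (PiM {..<n} M) {x} = bern_pmf (\<lambda>i. measure (M i) {1}) n x"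
proof -
  have x_i: "x i \<in> {-1, 1}" if "i < n" for i
    using x that by (auto simp: cube_def)
  have space_M: "space (M i) = {-1, 1}" if "i < n" for i
    using sets_eq_imp_space_eq[of "M i" "count_space {-1, 1}"] M[OF that] by simp
  have M_i: "emeasure (M i) {x i} = ennreal (if x i = 1 then measure (M i) {1} else 1 - measure (M i) {1})"
    if "i < n" for i
  proof -
    interpret prob_space "M i" using M[OF that] by simp
    show ?thesis
      using x_i[OF that] measure_minus_one_sign[of "M i"] M[OF that] by (auto simp: emeasure_eq_measure)
  qed
  have "{x} = PiE {..<n} (\<lambda>i. {x i})"
    using x by (simp add: cube_def PiE_singleton[symmetric] PiE_iff)
  also have "\<dots> = prod_emb {..<n} M {..<n} (PiE {..<n} (\<lambda>i. {x i}))"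
    using x_i space_M by (intro prod_emb_PiE_same_index[symmetric]) auto
  finally have "emeasure (PiM {..<n} M) {x} = (\<Prod>i<n. emeasure (M i) {x i})"
    using emeasure_PiM_emb[of "{..<n}" M "{..<n}" "\<lambda>i. {x i}"] M x_i by auto
  also have "\<dots> = ennreal (bern_pmf (\<lambda>i. measure (M i) {1}) n x)"
    unfolding bern_pmf_def using M_i M prob_space.prob_le_1[of "M _" "{1}"]
    by (subst prod_ennreal[symmetric]) (auto intro!: prod.cong)
  finally have "emeasure (PiM {..<n} M) {x} = ennreal (bern_pmf (\<lambda>i. measure (M i) {1}) n x)" .
  moreover have "0 \<le> bern_pmf (\<lambda>i. measure (M i) {1}) n x"
    using M prob_space.prob_le_1[of "M _" "{1}"] by (intro bern_pmf_nonneg) auto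
  ultimately show ?thesis by (intro measure_eq_emeasure_eq_ennreal)
qed

lemma
  fixes f :: "'a \<Rightarrow> real"
  assumes sets_M: "sets M = Pow A" and "finite A" "finite_measure M"
  shows integrable_finite_space: "integrable M f"
    and integral_finite_space: "(\<integral>x. f x \<partial>M) = (\<Sum>a\<in>A. f a * measure M {a})"
proof -
  interpret finite_measure M by fact
  have space_M: "space M = A" using sets_eq_imp_space_eq[of M "count_space A"] sets_M by simp
  have f_meas: "f \<in> borel_measurable M"
    by (subst measurable_cong_sets[OF sets_M[unfolded sets_count_space[symmetric]] refl]) simp
  have "\<bar>f x\<bar> \<le> (\<Sum>a\<in>A. \<bar>f a\<bar>)" if "x \<in> A" for x
    using \<open>finite A\<close> that by (intro member_le_sum) auto
  then show "integrable M f"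
    using f_meas space_M by (intro integrable_const_bound[where B = "\<Sum>a\<in>A. \<bar>f a\<bar>"]) auto
  have "(\<integral>x. f x \<partial>M) = (\<integral>x. f x * indicator A x \<partial>M)"
    using space_M by (intro Bochner_Integration.integral_cong) auto
  also have "\<dots> = (\<Sum>a\<in>A. f a * measure M {a})"
    using sets_M \<open>finite A\<close> by (intro integral_indicator_finite_real) (auto simp: less_top[symmetric])
  finally show "(\<integral>x. f x \<partial>M) = (\<Sum>a\<in>A. f a * measure M {a})" .
qed

lemma rel_entropy_finite_space:
  assumes sets: "sets \<nu> = Pow A" "sets \<mu> = Pow A" and "finite A"
    and "finite_measure \<nu>" "finite_measure \<mu>" and pos: "\<And>a. a \<in> A \<Longrightarrow> 0 < measure \<mu> {a}"
  shows "rel_entropy \<nu> \<mu> = ereal (\<Sum>a\<in>A. measure \<nu> {a} * ln (measure \<nu> {a} / measure \<mu> {a}))"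
proof -
  interpret \<nu>: finite_measure \<nu> by fact
  interpret \<mu>: finite_measure \<mu> by fact
  have "null_sets \<mu> = {{}}"
  proof -
    have "N = {}" if "N \<in> null_sets \<mu>" for N
    proof -
      have "N \<subseteq> A" using \<open>N \<in> null_sets \<mu>\<close> sets by auto
      have "emeasure \<mu> {a} \<le> emeasure \<mu> N" if "a \<in> N" for a
        using \<open>N \<in> null_sets \<mu>\<close> that by (intro emeasure_mono) auto
      then show ?thesis
        using \<open>N \<in> null_sets \<mu>\<close> \<open>N \<subseteq> A\<close> pos \<mu>.emeasure_eq_measure by fastforce
    qed
    then show ?thesis by auto
  qed
  then have ac: "absolutely_continuous \<mu> \<nu>"
    by (simp add: absolutely_continuous_def)
  have RN: "enn2real (RN_deriv \<mu> \<nu> a) = measure \<nu> {a} / measure \<mu> {a}" if "a \<in> A" for a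
  proof -
    have "emeasure \<nu> {a} = RN_deriv \<mu> \<nu> a * emeasure \<mu> {a}"
      using \<mu>.RN_deriv_singleton[OF ac] that sets by simp
    then have "measure \<nu> {a} = enn2real (RN_deriv \<mu> \<nu> a) * measure \<mu> {a}"
      unfolding measure_def by (simp add: enn2real_mult)
    then show ?thesis using pos[OF that] by simp
  qed
  have "(\<integral>x. ln (enn2real (RN_deriv \<mu> \<nu> x)) \<partial>\<nu>)
      = (\<Sum>a\<in>A. measure \<nu> {a} * ln (measure \<nu> {a} / measure \<mu> {a}))"
    using integral_finite_space[OF sets(1) assms(3,4)] RN by (simp add: mult.commute)
  then show ?thesis
    unfolding rel_entropy_def using sets ac integrable_finite_space[OF sets(1) assms(3,4)] by simp
qed

lemma sets_mu_p [simp]: "sets (mu_p p) = sets (count_space {-1, 1})"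
  by (simp add: mu_p_def)

lemma emeasure_mu_p_singleton:
  "b \<in> {-1, 1} \<Longrightarrow> emeasure (mu_p p) {b} = ennreal (if b = 1 then p else 1 - p)"
  unfolding mu_p_def by (subst emeasure_density) (auto simp: nn_integral_count_space_finite indicator_def)

lemma prob_space_mu_p:
  assumes "0 < p" "p < 1"
  shows "prob_space (mu_p p)"
proof
  show "emeasure (mu_p p) (space (mu_p p)) = 1"
    using assms unfolding mu_p_def
    by (simp add: emeasure_density nn_integral_count_space_finite ennreal_plus[symmetric])
qed

lemma rel_entropy_PiM_mu_p:
  assumes "0 < p" "p < 1" "prob_space \<nu>" "sets \<nu> = Pow (cube n)"
  shows "rel_entropy \<nu> (PiM {..<n} (\<lambda>_. mu_p p)) = ereal (rel_entropy_pmf p n (\<lambda>x. measure \<nu> {x}))"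
proof -
  have mu_p_1: "measure (mu_p p) {1} = p"
    using assms emeasure_mu_p_singleton[of 1 p] by (simp add: measure_def)
  have "measure (PiM {..<n} (\<lambda>_. mu_p p)) {x} = bern_pmf (\<lambda>_. p) n x" if "x \<in> cube n" for x
    using measure_PiM_singleton_cube[of n "\<lambda>_. mu_p p"] that prob_space_mu_p assms mu_p_1 by simp
  moreover have "finite_measure (PiM {..<n} (\<lambda>_. mu_p p))"
    using assms prob_space_PiM[of "{..<n}" "\<lambda>_. mu_p p"] prob_space_mu_p by (simp add: prob_space_def)
  ultimately show ?thesis
    unfolding rel_entropy_pmf_def using assms bern_pmf_pos[of n "\<lambda>_. p"]
    by (subst rel_entropy_finite_space[where A = "cube n"])
       (auto simp: sets_PiM_cube prob_space_def)
qed

abbreviation unifU_PiM :: "nat \<Rightarrow> (nat \<Rightarrow> real) measure" where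
  "unifU_PiM n \<equiv> PiM {..<n} (\<lambda>_. unifU)"

lemma space_unifU_PiM: "space (unifU_PiM n) = PiE {..<n} (\<lambda>_. UNIV)"
  by (simp add: space_PiM)

lemma prob_space_unifU_PiM: "prob_space (unifU_PiM n)"
  by (intro prob_space_PiM prob_space_unifU)

lemma emeasure_unifU_UNIV: "emeasure unifU UNIV = 1"
  using prob_space.emeasure_space_1[OF prob_space_unifU] by simp

lemma restrict_fun_upd_unifU_PiM:
  "v \<in> space (unifU_PiM n) \<Longrightarrow> restrict (v(n := y)) {..<n} = v"
  by (auto simp: space_unifU_PiM PiE_def extensional_def fun_eq_iff)

lemma fun_upd_in_space_unifU_PiM:
  "v \<in> space (unifU_PiM n) \<Longrightarrow> v(n := y) \<in> space (unifU_PiM (Suc n))"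
  by (auto simp: space_unifU_PiM PiE_iff extensional_def)

lemma nn_integral_unifU_PiM_Suc:
  assumes "f \<in> borel_measurable (unifU_PiM (Suc n))"
  shows "(\<integral>\<^sup>+u. f u \<partial>unifU_PiM (Suc n)) = (\<integral>\<^sup>+v. (\<integral>\<^sup>+y. f (v(n := y)) \<partial>unifU) \<partial>unifU_PiM n)"
proof -
  interpret product_sigma_finite "\<lambda>_. unifU"
    by (simp add: product_sigma_finite_def prob_space_imp_sigma_finite prob_space_unifU)
  show ?thesis
    using product_nn_integral_insert[of "{..<n}" n f] assms by (simp add: lessThan_Suc)
qed

lemma measurable_cube_component:
  assumes "F \<in> M \<rightarrow>\<^sub>M count_space (cube n)" "i < n"
  shows "(\<lambda>z. F z i) \<in> M \<rightarrow>\<^sub>M count_space {-1, 1}"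
  using measurable_compose[OF assms(1)[unfolded count_space_cube]
      measurable_component_singleton[of i "{..<n}"]] assms(2)
  by simp

lemma measurable_into_sign:
  assumes "f \<in> borel_measurable M" "\<And>z. z \<in> space M \<Longrightarrow> f z \<in> {-1, 1::real}"
  shows "f \<in> M \<rightarrow>\<^sub>M count_space {-1, 1}"
proof (subst measurable_count_space_eq2, simp, intro conjI ballI)
  show "f \<in> space M \<rightarrow> {-1, 1}" using assms(2) by auto
  fix a :: real
  show "f -` {a} \<inter> space M \<in> sets M" using measurable_sets[OF assms(1), of "{a}"] by simp
qed

lemma borel_measurable_coordinates:
  assumes "F \<in> M \<rightarrow>\<^sub>M count_space (cube n)" "V \<in> M \<rightarrow>\<^sub>M unifU_PiM n" "i < n"
  shows "(\<lambda>z. F z i) \<in> borel_measurable M" "(\<lambda>z. V z i) \<in> borel_measurable M"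
  using measurable_compose[OF measurable_cube_component[OF assms(1,3)] borel_measurable_count_space]
    measurable_compose[OF assms(2) measurable_component_singleton[of i "{..<n}" "\<lambda>_. unifU"]] assms(3)
  by (auto simp: measurable_cong_sets[OF refl sets_unifU])

lemma borel_measurable_wp:
  assumes "0 < p" "p < 1" "F \<in> M \<rightarrow>\<^sub>M count_space (cube n)" "V \<in> M \<rightarrow>\<^sub>M unifU_PiM n"
  shows "(\<lambda>z. wp p n (F z) (V z)) \<in> borel_measurable M"
  unfolding wp_eq_sum_wp1[OF assms(1,2)]
  using borel_measurable_coordinates[OF assms(3,4)] by (intro borel_measurable_sum) auto

lemma nn_integral_finite_range:
  assumes T: "T \<in> M \<rightarrow>\<^sub>M count_space A" and "finite A"
  shows "(\<integral>\<^sup>+v. g (T v) \<partial>M) = (\<Sum>a\<in>A. g a * emeasure M {v \<in> space M. T v = a})"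
proof -
  have sets: "{v \<in> space M. T v = a} \<in> sets M" for a
  proof -
    have "{v \<in> space M. T v = a} = T -` ({a} \<inter> A) \<inter> space M"
      using measurable_space[OF T] by auto
    then show ?thesis using measurable_sets[OF T, of "{a} \<inter> A"] by simp
  qed
  have "(\<integral>\<^sup>+v. g (T v) \<partial>M) = (\<integral>\<^sup>+v. (\<Sum>a\<in>A. g a * indicator {v \<in> space M. T v = a} v) \<partial>M)"
  proof (rule nn_integral_cong)
    fix v assume "v \<in> space M"
    then have "T v \<in> A" using measurable_space[OF T] by auto
    then show "g (T v) = (\<Sum>a\<in>A. g a * indicator {v \<in> space M. T v = a} v)"
      using \<open>v \<in> space M\<close> \<open>finite A\<close> by (simp add: indicator_def sum.delta' if_distrib cong: if_cong)
  qed
  also have "\<dots> = (\<Sum>a\<in>A. g a * emeasure M {v \<in> space M. T v = a})"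
    using sets by (simp add: nn_integral_sum nn_integral_cmult_indicator)
  finally show ?thesis .
qed

definition knothe_step ::
    "nat \<Rightarrow> ((nat \<Rightarrow> real) \<Rightarrow> (nat \<Rightarrow> real)) \<Rightarrow> ((nat \<Rightarrow> real) \<Rightarrow> real)
      \<Rightarrow> (nat \<Rightarrow> real) \<Rightarrow> (nat \<Rightarrow> real)"
  where "knothe_step n T Q u =
    (let x = T (restrict u {..<n}) in x(n := bern_quantile (Q x) (u n)))"

lemma knothe_step_fun_upd:
  assumes "v \<in> space (unifU_PiM n)"
  shows "knothe_step n T Q (v(n := y)) = (T v)(n := bern_quantile (Q (T v)) y)"
  by (simp add: knothe_step_def Let_def restrict_fun_upd_unifU_PiM[OF assms])

lemma measurable_knothe_step:
  assumes T: "T \<in> unifU_PiM n \<rightarrow>\<^sub>M count_space (cube n)"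
  shows "knothe_step n T Q \<in> unifU_PiM (Suc n) \<rightarrow>\<^sub>M count_space (cube (Suc n))"
proof -
  let ?x = "\<lambda>u. T (restrict u {..<n})"
  let ?b = "\<lambda>u. bern_quantile (Q (?x u)) (u n)"
  have "(\<lambda>u. restrict u {..<n}) \<in> unifU_PiM (Suc n) \<rightarrow>\<^sub>M unifU_PiM n"
    by (rule measurable_restrict_subset) auto
  from measurable_compose[OF this T]
  have x: "?x \<in> unifU_PiM (Suc n) \<rightarrow>\<^sub>M count_space (cube n)" .
  have "(\<lambda>u. Q (?x u)) \<in> borel_measurable (unifU_PiM (Suc n))"
    using measurable_compose[OF x borel_measurable_count_space] .
  moreover have "(\<lambda>u. u n) \<in> borel_measurable (unifU_PiM (Suc n))"
    using measurable_component_singleton[of n "{..<Suc n}" "\<lambda>_. unifU"]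
    by (simp add: measurable_cong_sets[OF refl sets_unifU])
  ultimately have "?b \<in> borel_measurable (unifU_PiM (Suc n))"
    by (rule borel_measurable_bern_quantile)
  then have b: "?b \<in> unifU_PiM (Suc n) \<rightarrow>\<^sub>M count_space {-1, 1}"
    by (rule measurable_into_sign) (simp add: bern_quantile_def)
  have "(\<lambda>u i. if i = n then ?b u else ?x u i) \<in> unifU_PiM (Suc n) \<rightarrow>\<^sub>M PiM {..<Suc n} (\<lambda>_. count_space {-1, 1})"
  proof (rule measurable_PiM_single')
    fix i assume "i \<in> {..<Suc n}"
    then show "(\<lambda>u. if i = n then ?b u else ?x u i) \<in> unifU_PiM (Suc n) \<rightarrow>\<^sub>M count_space {-1, 1}"
      using b measurable_cube_component[OF x, of i] by (cases "i = n") simp_all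
  next
    show "(\<lambda>u i. if i = n then ?b u else ?x u i)
        \<in> space (unifU_PiM (Suc n)) \<rightarrow> (\<Pi>\<^sub>E i\<in>{..<Suc n}. space (count_space {-1, 1}))"
      using measurable_space[OF x] by (auto simp: cube_def bern_quantile_def PiE_iff extensional_def)
  qed
  moreover have "knothe_step n T Q = (\<lambda>u i. if i = n then ?b u else ?x u i)"
    by (simp add: fun_eq_iff knothe_step_def Let_def)
  ultimately show ?thesis by (simp add: count_space_cube)
qed

lemma emeasure_knothe_step_fibre:
  assumes T: "T \<in> unifU_PiM n \<rightarrow>\<^sub>M count_space (cube n)"
    and x: "x \<in> cube n" "b \<in> {-1, 1}" and Q: "0 \<le> Q x" "Q x \<le> 1"
  shows "emeasure (unifU_PiM (Suc n)) {u \<in> space (unifU_PiM (Suc n)). knothe_step n T Q u = x(n := b)}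
       = ennreal (if b = 1 then Q x else 1 - Q x) * emeasure (unifU_PiM n) {v \<in> space (unifU_PiM n). T v = x}"
    (is "emeasure _ ?A = ?c * emeasure _ ?F")
proof -
  let ?S = "{y. bern_quantile (Q x) y = b}"
  have A: "?A \<in> sets (unifU_PiM (Suc n))"
    using measurable_sets[OF measurable_knothe_step[OF T], of "{x(n := b)}"] fun_upd_in_cube[OF x]
    by (simp add: vimage_def Int_def conj_commute)
  have F: "?F \<in> sets (unifU_PiM n)"
    using measurable_sets[OF T, of "{x}"] x by (simp add: vimage_def Int_def conj_commute)
  have ind_eq: "indicator ?A (v(n := y)) = indicator ?F v * (indicator ?S y :: ennreal)"
    if "v \<in> space (unifU_PiM n)" for v y
    using that measurable_space[OF T that] x
    by (auto simp: indicator_def knothe_step_fun_upd fun_upd_in_space_unifU_PiM fun_upd_cube_eq_iff)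
  have "emeasure (unifU_PiM (Suc n)) ?A = (\<integral>\<^sup>+u. indicator ?A u \<partial>unifU_PiM (Suc n))"
    using A by simp
  also have "\<dots> = (\<integral>\<^sup>+v. (\<integral>\<^sup>+y. indicator ?A (v(n := y)) \<partial>unifU) \<partial>unifU_PiM n)"
    using A by (intro nn_integral_unifU_PiM_Suc) simp
  also have "\<dots> = (\<integral>\<^sup>+v. (\<integral>\<^sup>+y. indicator ?F v * indicator ?S y \<partial>unifU) \<partial>unifU_PiM n)"
    by (intro nn_integral_cong) (simp add: ind_eq)
  also have "\<dots> = (\<integral>\<^sup>+v. indicator ?F v * emeasure unifU ?S \<partial>unifU_PiM n)"
  proof (rule nn_integral_cong)
    have "?S \<in> sets unifU" by simp
    then show "(\<integral>\<^sup>+y. indicator ?F v * indicator ?S y \<partial>unifU)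
        = indicator ?F v * emeasure unifU ?S" for v
      by (rule nn_integral_cmult_indicator)
  qed
  also have "\<dots> = emeasure (unifU_PiM n) ?F * emeasure unifU ?S"
    using F by (simp add: nn_integral_multc)
  also have "\<dots> = ?c * emeasure (unifU_PiM n) ?F"
    by (subst mult.commute) (simp add: emeasure_unifU_bern_quantile[OF Q x(2)])
  finally show ?thesis .
qed

lemma nn_integral_wp_knothe_step:
  assumes p: "0 < p" "p < 1" and T: "T \<in> unifU_PiM n \<rightarrow>\<^sub>M count_space (cube n)"
    and Q: "\<And>x. x \<in> cube n \<Longrightarrow> 0 \<le> Q x \<and> Q x \<le> 1"
  shows "(\<integral>\<^sup>+u. wp p (Suc n) (knothe_step n T Q u) u \<partial>unifU_PiM (Suc n))
       = (\<integral>\<^sup>+v. wp p n (T v) v \<partial>unifU_PiM n) + (\<integral>\<^sup>+v. ennreal (Ip p (2 * Q (T v) - 1)) \<partial>unifU_PiM n)"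
proof -
  have [measurable]: "(\<lambda>v. wp p n (T v) v) \<in> borel_measurable (unifU_PiM n)"
    using borel_measurable_wp[OF p T measurable_ident_sets[OF refl]] .
  have [measurable]: "(\<lambda>v. ennreal (Ip p (2 * Q (T v) - 1))) \<in> borel_measurable (unifU_PiM n)"
    using measurable_compose[OF T borel_measurable_count_space] .
  have "(\<integral>\<^sup>+y. wp p (Suc n) (knothe_step n T Q (v(n := y))) (v(n := y)) \<partial>unifU)
      = wp p n (T v) v + ennreal (Ip p (2 * Q (T v) - 1))"
    if v: "v \<in> space (unifU_PiM n)" for v
  proof -
    have "(\<integral>\<^sup>+y. wp p (Suc n) (knothe_step n T Q (v(n := y))) (v(n := y)) \<partial>unifU)
        = (\<integral>\<^sup>+y. wp p n (T v) v + wp1 p (bern_quantile (Q (T v)) y) y \<partial>unifU)"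
      using v by (simp add: knothe_step_fun_upd wp_Suc_fun_upd[OF p])
    also have "\<dots> = wp p n (T v) v + ennreal (Ip p (2 * Q (T v) - 1))"
      using Q[OF measurable_space[OF T v, simplified]] p
      by (simp add: nn_integral_add nn_integral_wp1_bern_quantile emeasure_unifU_UNIV)
    finally show ?thesis .
  qed
  moreover have "(\<lambda>u. wp p (Suc n) (knothe_step n T Q u) u) \<in> borel_measurable (unifU_PiM (Suc n))"
    using borel_measurable_wp[OF p measurable_knothe_step[OF T] measurable_ident_sets[OF refl]] .
  ultimately show ?thesis
    by (simp add: nn_integral_unifU_PiM_Suc nn_integral_add cong: nn_integral_cong)
qed

lemma emeasure_knothe_step_cond_one:
  assumes T: "T \<in> unifU_PiM n \<rightarrow>\<^sub>M count_space (cube n)"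
    and f: "\<And>x. x \<in> cube (Suc n) \<Longrightarrow> 0 \<le> f x"
    and T_law: "\<And>x. x \<in> cube n \<Longrightarrow>
      emeasure (unifU_PiM n) {v \<in> space (unifU_PiM n). T v = x} = ennreal (marg_first n f x)"
    and x: "x \<in> cube (Suc n)"
  shows "emeasure (unifU_PiM (Suc n)) {u \<in> space (unifU_PiM (Suc n)). knothe_step n T (cond_one n f) u = x}
    = ennreal (f x)"
proof -
  obtain x' b where x': "x' \<in> cube n" "b \<in> {-1, 1}" and x_eq: "x = x'(n := b)"
    using x by (rule cube_SucE)
  have f_x': "0 \<le> f (x'(n := 1))" "0 \<le> f (x'(n := -1))"
    using f fun_upd_in_cube[OF x'(1)] by auto
  define c where "c = (if b = 1 then cond_one n f x' else 1 - cond_one n f x')"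
  have "c * marg_first n f x' = f x"
  proof (cases "b = 1")
    case True
    then have "c = cond_one n f x'" by (simp add: c_def)
    then show ?thesis using marg_first_mult_cond_one(1)[OF f_x'] x_eq True by (metis mult.commute)
  next
    case False
    then have "b = -1" "c = 1 - cond_one n f x'" using x'(2) by (simp_all add: c_def)
    then show ?thesis using marg_first_mult_cond_one(2)[OF f_x'] x_eq by (metis mult.commute)
  qed
  moreover have "0 \<le> c" using cond_one_bounds[OF f_x'] by (simp add: c_def)
  ultimately have "ennreal c * ennreal (marg_first n f x') = ennreal (f x)"
    by (metis ennreal_mult')
  then show ?thesis
    using emeasure_knothe_step_fibre[OF T x', where Q = "cond_one n f"] cond_one_bounds[OF f_x']
      T_law[OF x'(1)]
    by (simp add: x_eq c_def)
qed

lemma nn_integral_wp_knothe_step_cond_one: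
  assumes p: "0 < p" "p < 1" and T: "T \<in> unifU_PiM n \<rightarrow>\<^sub>M count_space (cube n)"
    and f: "\<And>x. x \<in> cube (Suc n) \<Longrightarrow> 0 \<le> f x"
    and T_law: "\<And>x. x \<in> cube n \<Longrightarrow>
      emeasure (unifU_PiM n) {v \<in> space (unifU_PiM n). T v = x} = ennreal (marg_first n f x)"
  shows "(\<integral>\<^sup>+u. wp p (Suc n) (knothe_step n T (cond_one n f) u) u \<partial>unifU_PiM (Suc n))
    = (\<integral>\<^sup>+v. wp p n (T v) v \<partial>unifU_PiM n)
      + ennreal (\<Sum>x\<in>cube n. marg_first n f x * Ip p (2 * cond_one n f x - 1))"
proof -
  have f_x: "0 \<le> f (x(n := 1))" "0 \<le> f (x(n := -1))" if "x \<in> cube n" for x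
    using f fun_upd_in_cube[OF that] by auto
  have Q: "0 \<le> cond_one n f x \<and> cond_one n f x \<le> 1" if "x \<in> cube n" for x
    using cond_one_bounds[OF f_x[OF that]] by simp
  have nonneg: "0 \<le> marg_first n f x" "0 \<le> Ip p (2 * cond_one n f x - 1)" if "x \<in> cube n" for x
    using f_x[OF that] Q[OF that] by (auto simp: marg_first_def intro!: Ip_nonneg[OF p])
  have "(\<integral>\<^sup>+v. ennreal (Ip p (2 * cond_one n f (T v) - 1)) \<partial>unifU_PiM n)
      = (\<Sum>x\<in>cube n. ennreal (Ip p (2 * cond_one n f x - 1))
          * emeasure (unifU_PiM n) {v \<in> space (unifU_PiM n). T v = x})"
    by (rule nn_integral_finite_range[OF T]) simp
  also have "\<dots> = (\<Sum>x\<in>cube n. ennreal (marg_first n f x * Ip p (2 * cond_one n f x - 1)))"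
    using nonneg by (intro sum.cong) (simp_all add: T_law ennreal_mult mult.commute)
  also have "\<dots> = ennreal (\<Sum>x\<in>cube n. marg_first n f x * Ip p (2 * cond_one n f x - 1))"
    using nonneg by (intro sum_ennreal) simp
  finally show ?thesis by (simp add: nn_integral_wp_knothe_step[OF p T Q])
qed

lemma exists_transport_map_unifU_PiM:
  assumes p: "0 < p" "p < 1"
  shows "(\<And>x. x \<in> cube n \<Longrightarrow> 0 \<le> f x) \<Longrightarrow> (\<Sum>x\<in>cube n. f x) = 1 \<Longrightarrow>
    \<exists>T \<in> unifU_PiM n \<rightarrow>\<^sub>M count_space (cube n).
      (\<forall>x\<in>cube n. emeasure (unifU_PiM n) {u \<in> space (unifU_PiM n). T u = x} = ennreal (f x))
      \<and> (\<integral>\<^sup>+u. wp p n (T u) u \<partial>unifU_PiM n) \<le> ennreal (rel_entropy_pmf p n f)"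
proof (induction n arbitrary: f)
  case 0
  then have "f (\<lambda>_. undefined) = 1" by (simp add: cube_0)
  moreover have "space (unifU_PiM 0) = {\<lambda>_. undefined}" by (simp add: space_PiM)
  moreover have "(\<lambda>_. \<lambda>_. undefined) \<in> unifU_PiM 0 \<rightarrow>\<^sub>M count_space (cube 0)"
    by (simp add: cube_0)
  ultimately show ?case
    using prob_space.emeasure_space_1[OF prob_space_unifU_PiM[of 0]]
    by (intro bexI[of _ "\<lambda>_. \<lambda>_. undefined"]) (simp_all add: cube_0 wp_def rel_entropy_pmf_def)
next
  case (Suc n)
  define S where "S = (\<Sum>x\<in>cube n. marg_first n f x * Ip p (2 * cond_one n f x - 1))"
  have f_x: "0 \<le> f (x(n := 1))" "0 \<le> f (x(n := -1))" if "x \<in> cube n" for x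
    using Suc.prems(1) fun_upd_in_cube[OF that] by auto
  then have marg_nonneg: "0 \<le> marg_first n f x" if "x \<in> cube n" for x
    using that by (simp add: marg_first_def)
  have "0 \<le> S"
    unfolding S_def using f_x marg_nonneg cond_one_bounds
    by (intro sum_nonneg mult_nonneg_nonneg Ip_nonneg[OF p]) fastforce+
  have "(\<Sum>x\<in>cube n. marg_first n f x) = 1"
    using Suc.prems(2) by (simp add: sum_cube_Suc marg_first_def)
  then obtain T where T: "T \<in> unifU_PiM n \<rightarrow>\<^sub>M count_space (cube n)"
    and T_law: "\<forall>x\<in>cube n.
      emeasure (unifU_PiM n) {u \<in> space (unifU_PiM n). T u = x} = ennreal (marg_first n f x)"
    and T_cost: "(\<integral>\<^sup>+u. wp p n (T u) u \<partial>unifU_PiM n) \<le> ennreal (rel_entropy_pmf p n (marg_first n f))"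
    and H_nonneg: "0 \<le> rel_entropy_pmf p n (marg_first n f)"
    using Suc.IH[of "marg_first n f"] marg_nonneg rel_entropy_pmf_nonneg[OF p] by blast
  show ?case
  proof (intro bexI conjI ballI)
    show "emeasure (unifU_PiM (Suc n)) {u \<in> space (unifU_PiM (Suc n)). knothe_step n T (cond_one n f) u = x}
        = ennreal (f x)" if "x \<in> cube (Suc n)" for x
      using emeasure_knothe_step_cond_one[where f = f, OF T Suc.prems(1)] T_law that by blast
    have "(\<integral>\<^sup>+u. wp p (Suc n) (knothe_step n T (cond_one n f) u) u \<partial>unifU_PiM (Suc n))
        \<le> ennreal (rel_entropy_pmf p n (marg_first n f)) + ennreal S"
      using nn_integral_wp_knothe_step_cond_one[where f = f, OF p T Suc.prems(1)] T_law T_cost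
      by (simp add: S_def add_right_mono)
    also have "\<dots> = ennreal (rel_entropy_pmf p (Suc n) f)"
      using rel_entropy_pmf_Suc[where f = f, OF p Suc.prems(1)] H_nonneg \<open>0 \<le> S\<close> by (simp add: S_def ennreal_plus)
    finally show "(\<integral>\<^sup>+u. wp p (Suc n) (knothe_step n T (cond_one n f) u) u \<partial>unifU_PiM (Suc n))
        \<le> ennreal (rel_entropy_pmf p (Suc n) f)" .
  qed (rule measurable_knothe_step[OF T])
qed

lemma transport_cost_le_map:
  assumes T: "T \<in> M \<rightarrow>\<^sub>M N" "distr M N T = N"
    and c: "(\<lambda>z. c (fst z) (snd z)) \<in> borel_measurable (N \<Otimes>\<^sub>M M)"
  shows "transport_cost c N M \<le> (\<integral>\<^sup>+u. c (T u) u \<partial>M)"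
proof -
  define \<pi> where "\<pi> = distr M (N \<Otimes>\<^sub>M M) (\<lambda>u. (T u, u))"
  have TI: "(\<lambda>u. (T u, u)) \<in> M \<rightarrow>\<^sub>M N \<Otimes>\<^sub>M M"
    using T(1) by measurable
  have "\<pi> \<in> couplings N M"
    unfolding couplings_def \<pi>_def
    using T distr_distr[OF measurable_fst TI] distr_distr[OF measurable_snd TI]
    by (simp add: comp_def)
  then have "transport_cost c N M \<le> (\<integral>\<^sup>+z. c (fst z) (snd z) \<partial>\<pi>)"
    unfolding transport_cost_def by (rule INF_lower)
  also have "\<dots> = (\<integral>\<^sup>+u. c (T u) u \<partial>M)"
    unfolding \<pi>_def using c by (simp add: nn_integral_distr[OF TI])
  finally show ?thesis .
qed

lemma sum_measure_singleton_eq_1: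
  assumes "prob_space M" "sets M = Pow A" "finite A"
  shows "(\<Sum>a\<in>A. measure M {a}) = 1"
proof -
  interpret prob_space M by fact
  have "space M = A" using sets_eq_imp_space_eq[of M "count_space A"] assms(2) by simp
  then show ?thesis
    using finite_measure_eq_sum_singleton[of A] prob_space assms(2,3) by simp
qed

lemma transport_cost_le_rel_entropy_pmf:
  assumes p: "0 < p" "p < 1" and \<nu>: "prob_space \<nu>" "sets \<nu> = Pow (cube n)"
  shows "transport_cost (wp p n) \<nu> (unifU_PiM n) \<le> ennreal (rel_entropy_pmf p n (\<lambda>x. measure \<nu> {x}))"
proof -
  interpret prob_space \<nu> by fact
  have sets_\<nu>: "sets \<nu> = sets (count_space (cube n))" using \<nu> by simp
  have "(\<Sum>x\<in>cube n. measure \<nu> {x}) = 1"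
    using sum_measure_singleton_eq_1[OF \<nu>] by simp
  then have "\<exists>T \<in> unifU_PiM n \<rightarrow>\<^sub>M count_space (cube n).
      (\<forall>x\<in>cube n. emeasure (unifU_PiM n) {u \<in> space (unifU_PiM n). T u = x} = ennreal (measure \<nu> {x}))
      \<and> (\<integral>\<^sup>+u. wp p n (T u) u \<partial>unifU_PiM n) \<le> ennreal (rel_entropy_pmf p n (\<lambda>x. measure \<nu> {x}))"
    by (intro exists_transport_map_unifU_PiM[OF p]) simp_all
  then obtain T where T: "T \<in> unifU_PiM n \<rightarrow>\<^sub>M count_space (cube n)"
    and T_law: "\<forall>x\<in>cube n. emeasure (unifU_PiM n) {u \<in> space (unifU_PiM n). T u = x} = ennreal (measure \<nu> {x})"
    and T_cost: "(\<integral>\<^sup>+u. wp p n (T u) u \<partial>unifU_PiM n) \<le> ennreal (rel_entropy_pmf p n (\<lambda>x. measure \<nu> {x}))"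
    by blast
  have T_\<nu>: "T \<in> unifU_PiM n \<rightarrow>\<^sub>M \<nu>" using T by (simp add: measurable_cong_sets[OF refl sets_\<nu>])
  have "distr (unifU_PiM n) \<nu> T = \<nu>"
  proof (rule measure_eqI_finite[of _ "cube n"])
    show "sets (distr (unifU_PiM n) \<nu> T) = Pow (cube n)" by (simp only: sets_distr \<nu>(2))
    show "sets \<nu> = Pow (cube n)" by (rule \<nu>(2))
  next
    fix x assume x: "x \<in> cube n"
    have "T -` {x} \<inter> space (unifU_PiM n) = {u \<in> space (unifU_PiM n). T u = x}" by auto
    then show "emeasure (distr (unifU_PiM n) \<nu> T) {x} = emeasure \<nu> {x}"
      using x T_law \<nu> by (simp add: emeasure_distr[OF T_\<nu>] emeasure_eq_measure)
  qed simp
  moreover have "(\<lambda>z. wp p n (fst z) (snd z)) \<in> borel_measurable (\<nu> \<Otimes>\<^sub>M unifU_PiM n)"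
  proof (rule borel_measurable_wp[OF p _ measurable_snd])
    show "fst \<in> \<nu> \<Otimes>\<^sub>M unifU_PiM n \<rightarrow>\<^sub>M count_space (cube n)"
      using measurable_fst[of \<nu> "unifU_PiM n"] by (simp add: measurable_cong_sets[OF refl sets_\<nu>])
  qed
  ultimately have "transport_cost (wp p n) \<nu> (unifU_PiM n) \<le> (\<integral>\<^sup>+u. wp p n (T u) u \<partial>unifU_PiM n)"
    by (rule transport_cost_le_map[OF T_\<nu>])
  then show ?thesis using T_cost by (rule order_trans)
qed

lemma couplings_PiM_component:
  assumes \<pi>: "\<pi> \<in> couplings (PiM I N) (PiM I M)" and i: "i \<in> I"
    and N: "\<And>i. i \<in> I \<Longrightarrow> prob_space (N i)" and M: "\<And>i. i \<in> I \<Longrightarrow> prob_space (M i)"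
  shows "distr \<pi> (N i) (\<lambda>z. fst z i) = N i" and "distr \<pi> (M i) (\<lambda>z. snd z i) = M i"
proof -
  have sets_\<pi>: "sets \<pi> = sets (PiM I N \<Otimes>\<^sub>M PiM I M)" and
    marg: "distr \<pi> (PiM I N) fst = PiM I N" "distr \<pi> (PiM I M) snd = PiM I M"
    using \<pi> by (auto simp: couplings_def)
  have fst: "fst \<in> \<pi> \<rightarrow>\<^sub>M PiM I N" and snd: "snd \<in> \<pi> \<rightarrow>\<^sub>M PiM I M"
    by (simp_all add: measurable_cong_sets[OF sets_\<pi> refl])
  have "distr \<pi> (N i) (\<lambda>z. fst z i) = distr (distr \<pi> (PiM I N) fst) (N i) (\<lambda>x. x i)"
    using distr_distr[OF measurable_component_singleton[OF i] fst] by (simp add: comp_def)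
  also have "\<dots> = N i" using marg(1) distr_PiM_component[OF N i] by simp
  finally show "distr \<pi> (N i) (\<lambda>z. fst z i) = N i" .
  have "distr \<pi> (M i) (\<lambda>z. snd z i) = distr (distr \<pi> (PiM I M) snd) (M i) (\<lambda>x. x i)"
    using distr_distr[OF measurable_component_singleton[OF i] snd] by (simp add: comp_def)
  also have "\<dots> = M i" using marg(2) distr_PiM_component[OF M i] by simp
  finally show "distr \<pi> (M i) (\<lambda>z. snd z i) = M i" .
qed

lemma nn_integral_wp1_couplings_PiM_ge:
  assumes p: "0 < p" "p < 1"
    and N: "\<And>i. i < n \<Longrightarrow> prob_space (N i) \<and> sets (N i) = sets (count_space {-1, 1})"
    and \<pi>: "\<pi> \<in> couplings (PiM {..<n} N) (unifU_PiM n)" and i: "i < n"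
  shows "ennreal (Ip p (2 * measure (N i) {1} - 1)) \<le> (\<integral>\<^sup>+z. wp1 p (fst z i) (snd z i) \<partial>\<pi>)"
proof -
  interpret N: prob_space "N i" using N[OF i] by simp
  have sets_\<pi>: "sets \<pi> = sets (PiM {..<n} N \<Otimes>\<^sub>M unifU_PiM n)" using \<pi> by (simp add: couplings_def)
  have X: "(\<lambda>z. fst z i) \<in> \<pi> \<rightarrow>\<^sub>M N i" and Y: "(\<lambda>z. snd z i) \<in> \<pi> \<rightarrow>\<^sub>M unifU"
    using i by (simp_all add: measurable_cong_sets[OF sets_\<pi> refl])
  have laws: "distr \<pi> (N i) (\<lambda>z. fst z i) = N i" "distr \<pi> unifU (\<lambda>z. snd z i) = unifU"
    using couplings_PiM_component[OF \<pi>] i N prob_space_unifU by auto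
  have X_fibre: "emeasure \<pi> {z \<in> space \<pi>. fst z i = b} = emeasure (N i) {b}" if "b \<in> {-1, 1}" for b
  proof -
    have "{z \<in> space \<pi>. fst z i = b} = (\<lambda>z. fst z i) -` {b} \<inter> space \<pi>" by auto
    then show ?thesis
      using emeasure_distr[OF X, of "{b}"] laws(1) N[OF i] that by simp
  qed
  show ?thesis
  proof (rule nn_integral_wp1_ge[OF p])
    show "(\<lambda>z. fst z i) \<in> \<pi> \<rightarrow>\<^sub>M count_space {-1, 1}"
      using X N[OF i] by (simp add: measurable_cong_sets[OF refl, of "N i" "count_space {-1, 1}"])
    show "emeasure \<pi> {z \<in> space \<pi>. fst z i = 1} = ennreal (measure (N i) {1})"
      using X_fibre[of 1] by (simp add: N.emeasure_eq_measure)
    show "emeasure \<pi> {z \<in> space \<pi>. fst z i = -1} = ennreal (1 - measure (N i) {1})"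
      using X_fibre[of "-1"] measure_minus_one_sign[of "N i"] N[OF i]
      by (simp add: N.emeasure_eq_measure)
    show "0 \<le> measure (N i) {1}" "measure (N i) {1} \<le> 1" by (simp_all add: N.prob_le_1)
  qed (fact Y laws(2))+
qed

lemma transport_cost_PiM_ge:
  assumes p: "0 < p" "p < 1"
    and N: "\<And>i. i < n \<Longrightarrow> prob_space (N i) \<and> sets (N i) = sets (count_space {-1, 1})"
  shows "ennreal (\<Sum>i<n. Ip p (2 * measure (N i) {1} - 1))
    \<le> transport_cost (wp p n) (PiM {..<n} N) (unifU_PiM n)"
  unfolding transport_cost_def
proof (rule INF_greatest)
  fix \<pi> assume \<pi>: "\<pi> \<in> couplings (PiM {..<n} N) (unifU_PiM n)"
  have sets_\<pi>: "sets \<pi> = sets (PiM {..<n} N \<Otimes>\<^sub>M unifU_PiM n)" using \<pi> by (simp add: couplings_def)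
  have sets_N: "sets (PiM {..<n} N) = sets (count_space (cube n))" using sets_PiM_cube[of n N] N by simp
  have "fst \<in> \<pi> \<rightarrow>\<^sub>M PiM {..<n} N" by (simp add: measurable_cong_sets[OF sets_\<pi> refl])
  then have fst: "fst \<in> \<pi> \<rightarrow>\<^sub>M count_space (cube n)" by (simp add: measurable_cong_sets[OF refl sets_N])
  have snd: "snd \<in> \<pi> \<rightarrow>\<^sub>M unifU_PiM n"
    using measurable_snd[of "PiM {..<n} N" "unifU_PiM n"] by (simp add: measurable_cong_sets[OF sets_\<pi> refl])
  have "0 \<le> Ip p (2 * measure (N i) {1} - 1)" if "i < n" for i
    using prob_space.prob_le_1[of "N i" "{1}"] N[OF that] by (intro Ip_nonneg[OF p]) auto
  then have "ennreal (\<Sum>i<n. Ip p (2 * measure (N i) {1} - 1)) = (\<Sum>i<n. ennreal (Ip p (2 * measure (N i) {1} - 1)))"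
    by (intro sum_ennreal[symmetric]) simp
  also have "\<dots> \<le> (\<Sum>i<n. \<integral>\<^sup>+z. wp1 p (fst z i) (snd z i) \<partial>\<pi>)"
    using nn_integral_wp1_couplings_PiM_ge[OF p N \<pi>] by (intro sum_mono) auto
  also have "\<dots> = (\<integral>\<^sup>+z. (\<Sum>i<n. wp1 p (fst z i) (snd z i)) \<partial>\<pi>)"
    using borel_measurable_coordinates[OF fst snd] by (intro nn_integral_sum[symmetric]) auto
  also have "\<dots> = (\<integral>\<^sup>+z. wp p n (fst z) (snd z) \<partial>\<pi>)"
    by (simp add: wp_eq_sum_wp1[OF p])
  finally show "ennreal (\<Sum>i<n. Ip p (2 * measure (N i) {1} - 1)) \<le> (\<integral>\<^sup>+z. wp p n (fst z) (snd z) \<partial>\<pi>)" .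
qed

lemma rel_entropy_pmf_le_transport_cost_PiM:
  assumes p: "0 < p" "p < 1"
    and N: "\<And>i. i < n \<Longrightarrow> prob_space (N i) \<and> sets (N i) = sets (count_space {-1, 1})"
  shows "ennreal (rel_entropy_pmf p n (\<lambda>x. measure (PiM {..<n} N) {x}))
    \<le> transport_cost (wp p n) (PiM {..<n} N) (unifU_PiM n)"
proof -
  have "rel_entropy_pmf p n (\<lambda>x. measure (PiM {..<n} N) {x})
      = rel_entropy_pmf p n (bern_pmf (\<lambda>i. measure (N i) {1}) n)"
    unfolding rel_entropy_pmf_def using measure_PiM_singleton_cube[OF N] by simp
  also have "\<dots> = (\<Sum>i<n. Ip p (2 * measure (N i) {1} - 1))"
    by (intro rel_entropy_pmf_bern_pmf[OF p]) (simp add: N prob_space.prob_le_1)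
  finally show ?thesis using transport_cost_PiM_ge[OF p N] by simp
qed

theorem proposition2p3:
  fixes p :: real and n :: nat and \<nu> :: "(nat \<Rightarrow> real) measure"
  assumes "0 < p" and "p < 1"
    and "prob_space \<nu>"
    and "sets \<nu> = sets (PiM {..<n} (\<lambda>_. count_space {-1, 1}))"
  shows "enn2ereal (transport_cost (wp p n) \<nu> (PiM {..<n} (\<lambda>_. unifU)))
           \<le> rel_entropy \<nu> (PiM {..<n} (\<lambda>_. mu_p p))
         \<and> ((\<exists>\<nu>i. (\<forall>i<n. prob_space (\<nu>i i) \<and> sets (\<nu>i i) = sets (count_space {-1, 1}))
               \<and> \<nu> = PiM {..<n} \<nu>i)
         \<longrightarrow> enn2ereal (transport_cost (wp p n) \<nu> (PiM {..<n} (\<lambda>_. unifU)))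
             = rel_entropy \<nu> (PiM {..<n} (\<lambda>_. mu_p p)))"
proof -
  note p = assms(1,2)
  have sets_\<nu>: "sets \<nu> = Pow (cube n)" using assms(4) by (simp add: count_space_cube[symmetric])
  define H where "H = rel_entropy_pmf p n (\<lambda>x. measure \<nu> {x})"
  have H_nonneg: "0 \<le> H"
    unfolding H_def using sum_measure_singleton_eq_1[OF assms(3) sets_\<nu>]
    by (intro rel_entropy_pmf_nonneg[OF p]) auto
  have upper: "transport_cost (wp p n) \<nu> (unifU_PiM n) \<le> ennreal H"
    unfolding H_def by (rule transport_cost_le_rel_entropy_pmf[OF p assms(3) sets_\<nu>])
  have lower: "ennreal H \<le> transport_cost (wp p n) \<nu> (unifU_PiM n)"
    if "\<exists>N. (\<forall>i<n. prob_space (N i) \<and> sets (N i) = sets (count_space {-1, 1})) \<and> \<nu> = PiM {..<n} N"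
    using that rel_entropy_pmf_le_transport_cost_PiM[OF p] unfolding H_def by blast
  have "rel_entropy \<nu> (PiM {..<n} (\<lambda>_. mu_p p)) = ereal H"
    unfolding H_def by (rule rel_entropy_PiM_mu_p[OF p assms(3) sets_\<nu>])
  moreover have "enn2ereal (transport_cost (wp p n) \<nu> (unifU_PiM n)) \<le> ereal H"
    using upper H_nonneg by (metis enn2ereal_ennreal less_eq_ennreal.rep_eq)
  moreover note antisym[OF upper lower] H_nonneg
  ultimately show ?thesis by auto
qed

end
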